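(* Let $\mathfrak{A}=(Q,\Sigma_I\times\Sigma_O,q_\iota,\delta,\Omega)$ be a deterministic parity automaton and let $k>0$. If Player~$O$ wins the delay game $\Gamma_k(L(\mathfrak{A}))$, then she wins the game $\mathcal{G}_k$.
   Context: DPA: $\mathfrak{A}$ has finite state set $Q$, initial state $q_\iota$, transition function $\delta\colon Q\times(\Sigma_I\times\Sigma_O)\to Q$, coloring $\Omega\colon Q\to\mathbb{N}$; a run $q_0q_1\cdots$ ($q_0=q_\iota$, $q_{i+1}=\delta(q_i,\text{$i$-th letter})$) is accepting iff $\limsup_i\Omega(q_i)$ is even; $L(\mathfrak{A})$ is the set of words with accepting run. Delay game $\Gamma_k(L)$: in round $0$ Player~$I$ picks $a_0\cdots a_k\in\Sigma_I$, then Player~$O$ picks $b_0\in\Sigma_O$; in round $i>0$ Player~$I$ picks $a_{k+i}$, then Player~$O$ picks $b_i$. A strategy for $O$ is $\sigma\colon\Sigma_I^*\to\Sigma_O$, an outcome is consistent with it if $b_i=\sigma(a_0\cdots a_{i+k})$ for all $i$, it is winning if all consistent outcomes $\binom{a_0}{b_0}\binom{a_1}{b_1}\cdots$ lie in $L$, and $O$ wins if she has a winning strategy. The game $\mathcal{G}_k$: let $C=\Omega(Q)$. Define $\delta_\mathcal{T}((q,c),\binom{a}{b})=(q',\max\{c,\Omega(q')\})$ with $q'=\delta(q,\binom{a}{b})$, and $\delta_\mathcal{P}\colon 2^{Q\times C}\times\Sigma_I\to 2^{Q\times C}$ by $\delta_\mathcal{P}(S,a)=\bigcup_{(q,c)\in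 S}\bigcup_{b\in\Sigma_O}\{\delta_\mathcal{T}((q,c),\binom{a}{b})\}$, extended to words by $\delta^*_\mathcal{P}(S,\epsilon)=S$, $\delta^*_\mathcal{P}(S,wa)=\delta_\mathcal{P}(\delta^*_\mathcal{P}(S,w),a)$. For nonempty $D\subseteq Q\times C$ and $w\in\Sigma_I^*$ let $r^D_w\colon D\to 2^{Q\times C}$, $r^D_w(q,c)=\delta^*_\mathcal{P}(\{(q,\Omega(q))\},w)$. Let $\mathfrak{R}=\{r^D_w : w\in\Sigma_I^k,\ \emptyset\ne D\subseteq Q\times C\}$ (partial functions $Q\times C\rightharpoonup 2^{Q\times C}$ with domain $\mathrm{dom}(r)$). In $\mathcal{G}_k$, in each round $i\in\mathbb{N}$ Player~$I$ picks $r_i\in\mathfrak{R}$ and then Player~$O$ picks $(q_i,c_i)\in Q\times C$, subject to: $\mathrm{dom}(r_0)=\{(q_\iota,\Omega(q_\iota))\}$, $\mathrm{dom}(r_i)=r_{i-1}(q_{i-1},c_{i-1})$ for $i>0$, and $(q_i,c_i)\in\mathrm{dom}(r_i)$ for all $i$. A play is won by Player~$O$ iff $\limsup_i c_i$ is even. A strategy for $O$ maps each prefix $r_0(q_0,c_0)\cdots r_i$ to a legal $(q_i,c_i)$; she wins $\mathcal{G}_k$ if she has a strategy all of whose consistent plays she wins. *)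

theory Defs
  imports Main
begin

text \<open>Deterministic parity automaton over the alphabet 'a \<times> 'b (input \<times> output).
  The state set Q is the (finite) type 'q; the alphabets are the finite types 'a and 'b.\<close>
record ('q, 'a, 'b) dpa =
  init  :: 'q
  trans :: "'q \<Rightarrow> 'a \<times> 'b \<Rightarrow> 'q"
  col   :: "'q \<Rightarrow> nat"

definition nat_limsup_is :: "(nat \<Rightarrow> nat) \<Rightarrow> nat \<Rightarrow> bool" where
  "nat_limsup_is f c \<longleftrightarrow> (\<forall>\<^sub>F i in sequentially. f i \<le> c) \<and> (\<exists>\<^sub>F i in sequentially. c \<le> f i)"

definition limsup_even :: "(nat \<Rightarrow> nat) \<Rightarrow> bool" where
  "limsup_even f \<longleftrightarrow> (\<exists>c. nat_limsup_is f c \<and> even c)"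

fun run :: "('q, 'a, 'b) dpa \<Rightarrow> (nat \<Rightarrow> 'a \<times> 'b) \<Rightarrow> nat \<Rightarrow> 'q" where
  "run A w 0 = init A"
| "run A w (Suc i) = trans A (run A w i) (w i)"

definition lang :: "('q, 'a, 'b) dpa \<Rightarrow> (nat \<Rightarrow> 'a \<times> 'b) set" where
  "lang A = {w. limsup_even (\<lambda>i. col A (run A w i))}"

definition wins_delay_game :: "nat \<Rightarrow> (nat \<Rightarrow> 'a \<times> 'b) set \<Rightarrow> bool" where
  "wins_delay_game k L \<longleftrightarrow>
     (\<exists>\<sigma> :: 'a list \<Rightarrow> 'b. \<forall>\<alpha> :: nat \<Rightarrow> 'a.
        (\<lambda>i. (\<alpha> i, \<sigma> (map \<alpha> [0..<i + k + 1]))) \<in> L)"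

definition colors :: "('q, 'a, 'b) dpa \<Rightarrow> nat set" where
  "colors A = range (col A)"

definition deltaT :: "('q, 'a, 'b) dpa \<Rightarrow> 'q \<times> nat \<Rightarrow> 'a \<times> 'b \<Rightarrow> 'q \<times> nat" where
  "deltaT A qc ab = (let q' = trans A (fst qc) ab in (q', max (snd qc) (col A q')))"

definition deltaP :: "('q, 'a, 'b) dpa \<Rightarrow> ('q \<times> nat) set \<Rightarrow> 'a \<Rightarrow> ('q \<times> nat) set" where
  "deltaP A S a = (\<Union>qc\<in>S. \<Union>b. {deltaT A qc (a, b)})"

definition deltaP_star :: "('q, 'a, 'b) dpa \<Rightarrow> ('q \<times> nat) set \<Rightarrow> 'a list \<Rightarrow> ('q \<times> nat) set" where
  "deltaP_star A S w = foldl (deltaP A) S w"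

text \<open>Partial functions Q \<times> C \<rightharpoonup> 2^(Q \<times> C) are represented as maps.\<close>
type_synonym 'q rfun = "'q \<times> nat \<Rightarrow> ('q \<times> nat) set option"

definition r_fun :: "('q, 'a, 'b) dpa \<Rightarrow> ('q \<times> nat) set \<Rightarrow> 'a list \<Rightarrow> 'q rfun" where
  "r_fun A D w = (\<lambda>(q, c). if (q, c) \<in> D then Some (deltaP_star A {(q, col A q)} w) else None)"

definition Rset :: "('q, 'a, 'b) dpa \<Rightarrow> nat \<Rightarrow> 'q rfun set" where
  "Rset A k = {r_fun A D w | D w. length w = k \<and> D \<noteq> {} \<and> D \<subseteq> UNIV \<times> colors A}"

text \<open>A strategy for O in G_k maps the history r_0 (q_0,c_0) \<dots> r_{i-1} (q_{i-1},c_{i-1})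
  together with the current r_i to a move (q_i, c_i).\<close>
definition wins_Gk :: "('q, 'a, 'b) dpa \<Rightarrow> nat \<Rightarrow> bool" where
  "wins_Gk A k \<longleftrightarrow>
    (\<exists>\<tau> :: ('q rfun \<times> ('q \<times> nat)) list \<Rightarrow> 'q rfun \<Rightarrow> 'q \<times> nat.
      \<forall>(rs :: nat \<Rightarrow> 'q rfun) (qcs :: nat \<Rightarrow> 'q \<times> nat).
        ((\<forall>i. rs i \<in> Rset A k)
         \<and> dom (rs 0) = {(init A, col A (init A))}
         \<and> (\<forall>i. qcs i \<in> dom (rs i) \<longrightarrow> dom (rs (Suc i)) = the (rs i (qcs i)))
         \<and> (\<forall>i. qcs i = \<tau> (map (\<lambda>j. (rs j, qcs j)) [0..<i]) (rs i)))
        \<longrightarrow> (\<forall>i. qcs i \<in> dom (rs i)) \<and> limsup_even (\<lambda>i. snd (qcs i)))"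

end

theory Submission
  imports Defs
begin

(* Player O plays G_k by simulating a winning strategy \<sigma> of the delay game. Each move r_i of
   Player I is decoded into a block w_i of k input letters with r_i = r^D_{w_i}; Player O answers
   with the state that the \<sigma>-outcome on w_0 w_1 \<dots> reaches after i blocks, together with the
   maximal colour seen during the i-th block. Because \<sigma> looks ahead k letters, the outcome up
   to position i k only depends on w_0 \<dots> w_i, so this is a strategy in G_k. Her answers are
   legal since the run along a block is one of the runs collected by r_i, and the limsup of the
   block maxima is the limsup of the colours of the run, which is even. *)

lemma run_cong: "(\<And>j. j < n \<Longrightarrow> w j = w' j) \<Longrightarrow> run A w n = run A w' n"
  by (induction n) auto

lemma deltaP_star_snoc: "deltaP_star A S (u @ [a]) = deltaP A (deltaP_star A S u) a"
  by (simp add: deltaP_star_def)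

lemma run_segment_in_deltaP_star:
  assumes "\<And>j. j < length u \<Longrightarrow> fst (w (n + j)) = u ! j"
  shows "(run A w (n + length u), Max ((\<lambda>m. col A (run A w m)) ` {n..n + length u}))
         \<in> deltaP_star A {(run A w n, col A (run A w n))} u"
  using assms
proof (induction u rule: rev_induct)
  case Nil
  then show ?case by (simp add: deltaP_star_def)
next
  case (snoc a u)
  let ?c = "\<lambda>m. col A (run A w m)"
  let ?m = "n + length u"
  have IH: "(run A w ?m, Max (?c ` {n..?m})) \<in> deltaP_star A {(run A w n, ?c n)} u"
    using snoc.prems by (intro snoc.IH) (auto simp: nth_append)
  have "w ?m = (a, snd (w ?m))"
    using snoc.prems[of "length u"] by (cases "w ?m") simp
  moreover have "{n..Suc ?m} = insert (Suc ?m) {n..?m}"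
    by auto
  ultimately have step: "deltaT A (run A w ?m, Max (?c ` {n..?m})) (a, snd (w ?m))
      = (run A w (Suc ?m), Max (?c ` {n..Suc ?m}))"
    by (simp add: deltaT_def Let_def max.commute)
  have "deltaT A (run A w ?m, Max (?c ` {n..?m})) (a, snd (w ?m))
      \<in> deltaP_star A {(run A w n, ?c n)} (u @ [a])"
    using IH by (auto simp: deltaP_star_snoc deltaP_def)
  then show ?case
    by (simp only: step) simp
qed

lemma nat_limsup_is_block_Max:
  assumes "nat_limsup_is f c" and "k > 0"
  shows "nat_limsup_is (\<lambda>i. Max (f ` {(i - 1) * k..i * k})) c"
  unfolding nat_limsup_is_def
proof
  from assms(1) obtain N where N: "\<And>n. n \<ge> N \<Longrightarrow> f n \<le> c"
    by (auto simp: nat_limsup_is_def eventually_sequentially)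
  have "Max (f ` {(i - 1) * k..i * k}) \<le> c" if "i \<ge> N + 1" for i
  proof -
    have "N \<le> i - 1"
      using that by simp
    also have "\<dots> \<le> (i - 1) * k"
      using assms(2) by simp
    finally show ?thesis
      using N by simp
  qed
  then show "\<forall>\<^sub>F i in sequentially. Max (f ` {(i - 1) * k..i * k}) \<le> c"
    by (auto simp: eventually_sequentially)
next
  show "\<exists>\<^sub>F i in sequentially. c \<le> Max (f ` {(i - 1) * k..i * k})"
    unfolding frequently_sequentially
  proof
    fix I
    from assms(1) obtain n where n: "n \<ge> I * k" "c \<le> f n"
      by (auto simp: nat_limsup_is_def frequently_sequentially)
    let ?i = "Suc (n div k)"
    have "I \<le> ?i"
      using n(1) assms(2) by (simp add: less_eq_div_iff_mult_less_eq le_SucI)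
    moreover have "n \<in> {(?i - 1) * k..?i * k}"
      using dividend_less_div_times[OF assms(2), of n] by simp
    then have "c \<le> Max (f ` {(?i - 1) * k..?i * k})"
      using n(2) by (meson Max_ge finite_atLeastAtMost finite_imageI image_eqI order_trans)
    ultimately show "\<exists>i\<ge>I. c \<le> Max (f ` {(i - 1) * k..i * k})"
      by blast
  qed
qed

lemma limsup_even_block_Max:
  assumes "limsup_even f" and "k > 0"
  shows "limsup_even (\<lambda>i. Max (f ` {(i - 1) * k..i * k}))"
  using assms nat_limsup_is_block_Max by (auto simp: limsup_even_def)

lemma dom_r_fun [simp]: "dom (r_fun A D w) = D"
  by (auto simp: r_fun_def dom_def split: if_splits)

definition rset_word :: "('q, 'a, 'b) dpa \<Rightarrow> nat \<Rightarrow> 'q rfun \<Rightarrow> 'a list" where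
  "rset_word A k r = (SOME w. length w = k \<and> r_fun A (dom r) w = r)"

lemma rset_word:
  assumes "r \<in> Rset A k"
  shows "length (rset_word A k r) = k" and "r_fun A (dom r) (rset_word A k r) = r"
proof -
  from assms have "\<exists>w. length w = k \<and> r_fun A (dom r) w = r"
    by (auto simp: Rset_def)
  then have "length (rset_word A k r) = k \<and> r_fun A (dom r) (rset_word A k r) = r"
    unfolding rset_word_def by (rule someI_ex)
  then show "length (rset_word A k r) = k" and "r_fun A (dom r) (rset_word A k r) = r"
    by simp_all
qed

definition block_input :: "('q, 'a, 'b) dpa \<Rightarrow> nat \<Rightarrow> (nat \<Rightarrow> 'q rfun) \<Rightarrow> nat \<Rightarrow> 'a" where
  "block_input A k rs n = rset_word A k (rs (n div k)) ! (n mod k)"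

lemma block_input_cong:
  assumes "\<And>j. j \<le> i \<Longrightarrow> rs j = rs' j" and "n < Suc i * k"
  shows "block_input A k rs n = block_input A k rs' n"
proof -
  have "n div k \<le> i"
    using less_mult_imp_div_less[OF assms(2)] by simp
  then show ?thesis
    by (simp add: block_input_def assms(1))
qed

definition delay_outcome :: "('a list \<Rightarrow> 'b) \<Rightarrow> nat \<Rightarrow> (nat \<Rightarrow> 'a) \<Rightarrow> nat \<Rightarrow> 'a \<times> 'b" where
  "delay_outcome \<sigma> k \<alpha> i = (\<alpha> i, \<sigma> (map \<alpha> [0..<i + k + 1]))"

lemma run_delay_outcome_cong:
  assumes "\<And>n. n < m + k \<Longrightarrow> \<alpha> n = \<beta> n"
  shows "run A (delay_outcome \<sigma> k \<alpha>) m = run A (delay_outcome \<sigma> k \<beta>) m"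
proof (rule run_cong)
  fix j assume "j < m"
  then have "map \<alpha> [0..<j + k + 1] = map \<beta> [0..<j + k + 1]" and "\<alpha> j = \<beta> j"
    using assms by auto
  then show "delay_outcome \<sigma> k \<alpha> j = delay_outcome \<sigma> k \<beta> j"
    by (simp only: delay_outcome_def)
qed

(* Block i consists of the positions (i - 1) k .. i k; for i = 0 truncated subtraction makes
   it {0}, so the initial move is the initial state with its colour. *)
definition block_move :: "('q, 'a, 'b) dpa \<Rightarrow> nat \<Rightarrow> (nat \<Rightarrow> 'a \<times> 'b) \<Rightarrow> nat \<Rightarrow> 'q \<times> nat" where
  "block_move A k w i =
     (run A w (i * k), Max ((\<lambda>m. col A (run A w m)) ` {(i - 1) * k..i * k}))"

lemma block_move_cong:
  assumes "\<And>m. m \<le> i * k \<Longrightarrow> run A w m = run A w' m"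
  shows "block_move A k w i = block_move A k w' i"
proof -
  have "(\<lambda>m. col A (run A w m)) ` {(i - 1) * k..i * k}
      = (\<lambda>m. col A (run A w' m)) ` {(i - 1) * k..i * k}"
    using assms by (intro image_cong) auto
  then show ?thesis
    using assms by (simp add: block_move_def)
qed

lemma block_move_legal:
  assumes "\<And>i. rs i \<in> Rset A k"
    and "dom (rs 0) = {(init A, col A (init A))}"
    and "\<And>i. block_move A k w i \<in> dom (rs i) \<Longrightarrow>
      dom (rs (Suc i)) = the (rs i (block_move A k w i))"
    and "\<And>n. fst (w n) = block_input A k rs n"
  shows "block_move A k w i \<in> dom (rs i)"
proof (induction i)
  case 0
  show ?case
    using assms(2) by (simp add: block_move_def)
next
  case (Suc i)
  let ?u = "rset_word A k (rs i)"
  let ?p = "run A w (i * k)"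
  have "dom (rs (Suc i)) = the (r_fun A (dom (rs i)) ?u (block_move A k w i))"
    using assms(3)[OF Suc] rset_word(2)[OF assms(1)] by simp
  also have "\<dots> = deltaP_star A {(?p, col A ?p)} ?u"
    using Suc by (simp add: r_fun_def block_move_def)
  finally have dom_Suc: "dom (rs (Suc i)) = deltaP_star A {(?p, col A ?p)} ?u" .
  have "fst (w (i * k + j)) = ?u ! j" if "j < length ?u" for j
    using that rset_word(1)[OF assms(1)] by (simp add: assms(4) block_input_def)
  from run_segment_in_deltaP_star[OF this]
  show ?case
    unfolding dom_Suc block_move_def using rset_word(1)[OF assms(1)] by (simp add: add.commute)
qed

lemma limsup_even_block_move:
  assumes "w \<in> lang A" and "k > 0"
  shows "limsup_even (\<lambda>i. snd (block_move A k w i))"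
  using limsup_even_block_Max[of "\<lambda>m. col A (run A w m)"] assms
  by (simp add: block_move_def lang_def)

(* Beyond the history h, Player I's moves are padded with the current move r: in round
   length h, block_move only reads the input blocks 0 .. length h. *)
definition simulation_strategy :: "('q, 'a, 'b) dpa \<Rightarrow> nat \<Rightarrow> ('a list \<Rightarrow> 'b)
    \<Rightarrow> ('q rfun \<times> ('q \<times> nat)) list \<Rightarrow> 'q rfun \<Rightarrow> 'q \<times> nat" where
  "simulation_strategy A k \<sigma> h r =
     block_move A k
       (delay_outcome \<sigma> k (block_input A k (\<lambda>j. if j < length h then fst (h ! j) else r)))
       (length h)"

lemma simulation_strategy_play:
  "simulation_strategy A k \<sigma> (map (\<lambda>j. (rs j, qcs j)) [0..<i]) (rs i)
     = block_move A k (delay_outcome \<sigma> k (block_input A k rs)) i"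
proof -
  let ?rs' = "\<lambda>j. if j < i then rs j else rs i"
  have "simulation_strategy A k \<sigma> (map (\<lambda>j. (rs j, qcs j)) [0..<i]) (rs i)
      = block_move A k (delay_outcome \<sigma> k (block_input A k ?rs')) i"
    unfolding simulation_strategy_def by (simp cong: if_cong)
  also have "\<dots> = block_move A k (delay_outcome \<sigma> k (block_input A k rs)) i"
  proof (intro block_move_cong run_delay_outcome_cong)
    fix m n assume "m \<le> i * k" and "n < m + k"
    then show "block_input A k ?rs' n = block_input A k rs n"
      by (intro block_input_cong[of i]) auto
  qed
  finally show ?thesis .
qed

theorem mainTheorem2:
  fixes A :: "('q::finite, 'a::finite, 'b::finite) dpa" and k :: nat
  assumes "k > 0"
    and "wins_delay_game k (lang A)"
  shows "wins_Gk A k"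
proof -
  from assms(2) obtain \<sigma> :: "'a list \<Rightarrow> 'b" where \<sigma>: "\<And>\<alpha>. delay_outcome \<sigma> k \<alpha> \<in> lang A"
    unfolding wins_delay_game_def delay_outcome_def[abs_def] by blast
  show ?thesis
    unfolding wins_Gk_def
  proof (intro exI[of _ "simulation_strategy A k \<sigma>"] allI impI, elim conjE)
    fix rs :: "nat \<Rightarrow> 'q rfun" and qcs :: "nat \<Rightarrow> 'q \<times> nat"
    assume moves_I: "\<forall>i. rs i \<in> Rset A k"
      and dom_init: "dom (rs 0) = {(init A, col A (init A))}"
      and dom_next: "\<forall>i. qcs i \<in> dom (rs i) \<longrightarrow> dom (rs (Suc i)) = the (rs i (qcs i))"
      and play: "\<forall>i. qcs i = simulation_strategy A k \<sigma> (map (\<lambda>j. (rs j, qcs j)) [0..<i]) (rs i)"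
    define w where "w = delay_outcome \<sigma> k (block_input A k rs)"
    have "qcs i = block_move A k w i" for i
      using play[rule_format, of i] unfolding simulation_strategy_play w_def .
    then have qcs: "qcs = block_move A k w" ..
    have "\<forall>i. qcs i \<in> dom (rs i)"
      using block_move_legal[of rs A k w] moves_I dom_init dom_next
      by (simp add: qcs w_def delay_outcome_def)
    moreover have "limsup_even (\<lambda>i. snd (qcs i))"
      using limsup_even_block_move[OF \<sigma> assms(1)] by (simp add: qcs w_def)
    ultimately show "(\<forall>i. qcs i \<in> dom (rs i)) \<and> limsup_even (\<lambda>i. snd (qcs i))" ..
  qed
qed

end
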